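(* Let $X$ be a finite set and let $\mathcal{P}=\{X_1,\ldots,X_m\}$ be an $(m,k)$-partition of $X$ such that, for each $i\in\{1,\ldots,k\}$, $\mathcal{P}$ has exactly $m_i\ge1$ blocks of size $n_i\ge1$. Then \[|T(X,\mathcal{P})|=\prod_{i=1}^k\Bigg(\sum_{j=1}^k m_j n_j^{\,n_i}\Bigg)^{m_i}.\]
   Context: An $(m,k)$-partition is a partition with exactly $m$ blocks having exactly $k$ distinct block sizes (here $n_1,\ldots,n_k$ are the distinct block sizes). $T(X,\mathcal{P})$ is the set of all maps $f\colon X\to X$ such that for every block $B$ of $\mathcal{P}$ there is a block $C$ of $\mathcal{P}$ with $Bf\subseteq C$. *)

theory Defs
  imports Main "HOL-Library.FuncSet" "HOL-Library.Disjoint_Sets"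
begin

definition T_part :: "'a set \<Rightarrow> 'a set set \<Rightarrow> ('a \<Rightarrow> 'a) set" where
  "T_part X P = {f \<in> X \<rightarrow>\<^sub>E X. \<forall>B\<in>P. \<exists>C\<in>P. f ` B \<subseteq> C}"

end

theory Submission
  imports Defs
begin

text \<open>A map on \<open>X = \<Union>P\<close> is the same as a family of maps, one on each block, and the
  condition defining \<open>T(X,P)\<close> constrains each of them separately. Hence \<open>|T(X,P)|\<close> is the
  product over the blocks \<open>B\<close> of the number of maps from \<open>B\<close> into a single block, which is
  \<open>\<Sum>\<^sub>C |C|^|B|\<close> since these targets are disjoint. Grouping the blocks by their size, in the
  sum and in the product, gives the formula.\<close>

lemma the_block_eq:
  assumes "disjoint Q" "B \<in> Q" "x \<in> B"
  shows "(THE B. B \<in> Q \<and> x \<in> B) = B"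
  using assms by (intro the_equality) (auto dest: disjointD)

lemma bij_betw_restrict_blocks:
  assumes "disjoint Q"
  shows "bij_betw (\<lambda>f. \<lambda>B\<in>Q. restrict f B)
           {f \<in> \<Union>Q \<rightarrow>\<^sub>E Y. \<forall>B\<in>Q. R B (restrict f B)}
           (\<Pi>\<^sub>E B\<in>Q. {g \<in> B \<rightarrow>\<^sub>E Y. R B g})"
proof -
  define glue :: "('a set \<Rightarrow> 'a \<Rightarrow> 'b) \<Rightarrow> 'a \<Rightarrow> 'b"
    where "glue F = (\<lambda>x\<in>\<Union>Q. F (THE B. B \<in> Q \<and> x \<in> B) x)" for F
  have glue_apply: "glue F x = F B x" if "B \<in> Q" "x \<in> B" for F B x
    using that by (auto simp: glue_def the_block_eq[OF assms that])
  have restrict_glue: "restrict (glue F) B = F B"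
    if F: "F \<in> (\<Pi>\<^sub>E B\<in>Q. {g \<in> B \<rightarrow>\<^sub>E Y. R B g})" and "B \<in> Q" for F B
  proof
    fix x
    have "F B \<in> B \<rightarrow>\<^sub>E Y" using PiE_mem[OF F \<open>B \<in> Q\<close>] by simp
    then show "restrict (glue F) B x = F B x"
      using \<open>B \<in> Q\<close> by (cases "x \<in> B") (simp_all add: glue_apply PiE_arb[of "F B"])
  qed
  show ?thesis
  proof (rule bij_betw_byWitness[where f' = glue])
    show "\<forall>f\<in>{f \<in> \<Union>Q \<rightarrow>\<^sub>E Y. \<forall>B\<in>Q. R B (restrict f B)}. glue (\<lambda>B\<in>Q. restrict f B) = f"
    proof (intro ballI ext)
      fix f x assume f: "f \<in> {f \<in> \<Union>Q \<rightarrow>\<^sub>E Y. \<forall>B\<in>Q. R B (restrict f B)}"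
      show "glue (\<lambda>B\<in>Q. restrict f B) x = f x"
      proof (cases "x \<in> \<Union>Q")
        case True
        then obtain B where "B \<in> Q" "x \<in> B" by blast
        then show ?thesis by (simp add: glue_apply)
      next
        case False
        have "f x = undefined"
          using f False by (intro PiE_arb[of f "\<Union>Q" "\<lambda>_. Y"]) simp_all
        then show ?thesis using False by (simp add: glue_def)
      qed
    qed
    show "\<forall>F\<in>\<Pi>\<^sub>E B\<in>Q. {g \<in> B \<rightarrow>\<^sub>E Y. R B g}. (\<lambda>B\<in>Q. restrict (glue F) B) = F"
    proof
      fix F assume F: "F \<in> (\<Pi>\<^sub>E B\<in>Q. {g \<in> B \<rightarrow>\<^sub>E Y. R B g})"
      show "(\<lambda>B\<in>Q. restrict (glue F) B) = F"
      proof (rule ext)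
        fix B
        show "(\<lambda>B\<in>Q. restrict (glue F) B) B = F B"
          by (cases "B \<in> Q") (simp_all add: restrict_glue[OF F] PiE_arb[OF F])
      qed
    qed
    show "(\<lambda>f. \<lambda>B\<in>Q. restrict f B) ` {f \<in> \<Union>Q \<rightarrow>\<^sub>E Y. \<forall>B\<in>Q. R B (restrict f B)}
          \<subseteq> (\<Pi>\<^sub>E B\<in>Q. {g \<in> B \<rightarrow>\<^sub>E Y. R B g})"
      by auto
    show "glue ` (\<Pi>\<^sub>E B\<in>Q. {g \<in> B \<rightarrow>\<^sub>E Y. R B g}) \<subseteq> {f \<in> \<Union>Q \<rightarrow>\<^sub>E Y. \<forall>B\<in>Q. R B (restrict f B)}"
    proof (rule image_subsetI, intro CollectI conjI ballI)
      fix F assume F: "F \<in> (\<Pi>\<^sub>E B\<in>Q. {g \<in> B \<rightarrow>\<^sub>E Y. R B g})"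
      show "R B (restrict (glue F) B)" if "B \<in> Q" for B
        using PiE_mem[OF F that] by (simp add: restrict_glue[OF F that])
      have "glue F x \<in> Y" if "x \<in> \<Union>Q" for x
      proof -
        obtain B where "B \<in> Q" "x \<in> B" using \<open>x \<in> \<Union>Q\<close> by blast
        then show ?thesis using PiE_mem[OF F \<open>B \<in> Q\<close>] by (auto simp: glue_apply)
      qed
      then show "glue F \<in> \<Union>Q \<rightarrow>\<^sub>E Y" by (simp add: PiE_iff glue_def)
    qed
  qed
qed

lemma card_blockwise_maps:
  assumes "finite Q" "disjoint Q"
  shows "card {f \<in> \<Union>Q \<rightarrow>\<^sub>E Y. \<forall>B\<in>Q. R B (restrict f B)} = (\<Prod>B\<in>Q. card {g \<in> B \<rightarrow>\<^sub>E Y. R B g})"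
  by (simp add: bij_betw_same_card[OF bij_betw_restrict_blocks[OF assms(2)]] card_PiE[OF assms(1)])

lemma card_maps_into_one_block:
  assumes "partition_on X P" "finite X" "finite B" "B \<noteq> {}"
  shows "card {g \<in> B \<rightarrow>\<^sub>E X. \<exists>C\<in>P. g ` B \<subseteq> C} = (\<Sum>C\<in>P. card C ^ card B)"
proof -
  have blocks_sub: "C \<subseteq> X" if "C \<in> P" for C
    using assms(1) that by (auto simp: partition_on_def)
  have "{g \<in> B \<rightarrow>\<^sub>E X. \<exists>C\<in>P. g ` B \<subseteq> C} = (\<Union>C\<in>P. B \<rightarrow>\<^sub>E C)"
    using blocks_sub by (fastforce simp: PiE_iff image_subset_iff)
  also have "card \<dots> = (\<Sum>C\<in>P. card (B \<rightarrow>\<^sub>E C))"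
  proof (rule card_UN_disjoint)
    show "finite P" using assms(1,2) by (rule finite_elements[rotated])
    show "\<forall>C\<in>P. finite (B \<rightarrow>\<^sub>E C)"
      using assms(2,3) blocks_sub by (auto intro: finite_PiE finite_subset)
    obtain b where "b \<in> B" using assms(4) by blast
    then show "\<forall>C\<in>P. \<forall>C'\<in>P. C \<noteq> C' \<longrightarrow> (B \<rightarrow>\<^sub>E C) \<inter> (B \<rightarrow>\<^sub>E C') = {}"
      using partition_onD2[OF assms(1)] by (auto dest: disjointD)
  qed
  also have "\<dots> = (\<Sum>C\<in>P. card C ^ card B)"
    using assms(3) by (simp add: card_funcsetE)
  finally show ?thesis .
qed

lemma card_T_part:
  assumes "finite X" "partition_on X P"
  shows "card (T_part X P) = (\<Prod>B\<in>P. \<Sum>C\<in>P. card C ^ card B)"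
proof -
  have "T_part X P = {f \<in> \<Union>P \<rightarrow>\<^sub>E X. \<forall>B\<in>P. \<exists>C\<in>P. restrict f B ` B \<subseteq> C}"
    unfolding T_part_def partition_onD1[OF assms(2), symmetric] by simp
  also have "card \<dots> = (\<Prod>B\<in>P. card {g \<in> B \<rightarrow>\<^sub>E X. \<exists>C\<in>P. g ` B \<subseteq> C})"
    using finite_elements[OF assms] partition_onD2[OF assms(2)] by (rule card_blockwise_maps)
  also have "\<dots> = (\<Prod>B\<in>P. \<Sum>C\<in>P. card C ^ card B)"
  proof (rule prod.cong[OF refl], rule card_maps_into_one_block[OF assms(2,1)])
    fix B assume "B \<in> P"
    then show "finite B" "B \<noteq> {}"
      using assms partition_onD3[OF assms(2)] by (auto intro: finite_subset simp: partition_on_def)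
  qed
  finally show ?thesis .
qed

lemma sum_comp_eq_sum_card_fibres:
  fixes g :: "'b \<Rightarrow> 'c::comm_semiring_1"
  assumes "finite A" "inj_on n I" "h ` A = n ` I"
  shows "(\<Sum>a\<in>A. g (h a)) = (\<Sum>i\<in>I. of_nat (card {a \<in> A. h a = n i}) * g (n i))"
proof -
  have "(\<Sum>a\<in>A. g (h a)) = (\<Sum>v\<in>h ` A. \<Sum>a\<in>{a \<in> A. h a = v}. g (h a))"
    by (rule sum.image_gen[OF assms(1)])
  also have "\<dots> = (\<Sum>v\<in>n ` I. of_nat (card {a \<in> A. h a = v}) * g v)"
    unfolding assms(3) by (rule sum.cong[OF refl]) simp
  also have "\<dots> = (\<Sum>i\<in>I. of_nat (card {a \<in> A. h a = n i}) * g (n i))"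
    by (rule sum.reindex[OF assms(2), unfolded comp_def])
  finally show ?thesis .
qed

lemma prod_comp_eq_prod_card_fibres:
  fixes g :: "'b \<Rightarrow> 'c::comm_monoid_mult"
  assumes "finite A" "inj_on n I" "h ` A = n ` I"
  shows "(\<Prod>a\<in>A. g (h a)) = (\<Prod>i\<in>I. g (n i) ^ card {a \<in> A. h a = n i})"
proof -
  have "(\<Prod>a\<in>A. g (h a)) = (\<Prod>v\<in>h ` A. \<Prod>a\<in>{a \<in> A. h a = v}. g (h a))"
    by (rule prod.image_gen[OF assms(1)])
  also have "\<dots> = (\<Prod>v\<in>n ` I. g v ^ card {a \<in> A. h a = v})"
    unfolding assms(3) by (rule prod.cong[OF refl]) simp
  also have "\<dots> = (\<Prod>i\<in>I. g (n i) ^ card {a \<in> A. h a = n i})"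
    by (rule prod.reindex[OF assms(2), unfolded comp_def])
  finally show ?thesis .
qed

theorem theorem6p1:
  fixes X :: "'a set" and P :: "'a set set" and k :: nat and n m :: "nat \<Rightarrow> nat"
  assumes "finite X"
    and "partition_on X P"
    and "inj_on n {1..k}"
    and "card ` P = n ` {1..k}"
    and "\<And>i. i \<in> {1..k} \<Longrightarrow> n i \<ge> 1"
    and "\<And>i. i \<in> {1..k} \<Longrightarrow> m i \<ge> 1"
    and "\<And>i. i \<in> {1..k} \<Longrightarrow> card {B \<in> P. card B = n i} = m i"
  shows "card (T_part X P) = (\<Prod>i=1..k. (\<Sum>j=1..k. m j * n j ^ n i) ^ m i)"
proof -
  have finite_P: "finite P" using assms(1,2) by (rule finite_elements)
  have "card (T_part X P) = (\<Prod>B\<in>P. \<Sum>C\<in>P. card C ^ card B)"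
    using assms(1,2) by (rule card_T_part)
  also have "\<dots> = (\<Prod>B\<in>P. \<Sum>j=1..k. m j * n j ^ card B)"
    using sum_comp_eq_sum_card_fibres[OF finite_P assms(3,4), of "\<lambda>c. c ^ _"] assms(7)
    by simp
  also have "\<dots> = (\<Prod>i=1..k. (\<Sum>j=1..k. m j * n j ^ n i) ^ m i)"
    using prod_comp_eq_prod_card_fibres[OF finite_P assms(3,4), of "\<lambda>c. \<Sum>j=1..k. m j * n j ^ c"] assms(7)
    by simp
  finally show ?thesis .
qed

end
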